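(* Let $\lambda,\mu,\alpha>0$ and let $\xi(t)$, $t\ge 0$, be the Poisson process with uniform catastrophes with parameters $\lambda,\mu,\alpha$ (defined in the context). Let $\varphi:(0,\infty)\to(0,\infty)$ be a function such that $\lim_{T\to\infty}\varphi(T)/T=\infty$. Then the family of random variables $\xi_T(1):=\xi(T)/\varphi(T)$ satisfies the large deviation principle on $\mathbb{R}$ with normalizing function $\psi(T)=\varphi(T)\ln\frac{\varphi(T)}{T}$ and rate function $$ I_2(x)=\begin{cases}\infty, & x\in(-\infty,0),\\ x, & x\in[0,\infty).\end{cases} $$
   Context: Poisson process with uniform catastrophes: let $\eta(n)$, $n\in\mathbb{Z}^+=\{0,1,2,\dots\}$, be a Markov chain on $\mathbb{Z}^+$ with $\eta(0)=0$ and transition probabilities $\mathbf{P}(\eta(n+1)=j\mid\eta(n)=i)=\frac{\lambda}{\lambda+\mu}$ if $j=i+1$ (and $i\ge 1$), $=\frac{\mu}{i(\lambda+\mu)}$ if $0\le j<i$, $i\neq0$, and $=1$ if $i=0$, $j=1$. Let $\nu(t)$, $t\ge0$, be a Poisson process with rate $\alpha$, independent of $\eta$. Set $\xi(t):=\eta(\nu(t))$. Large deviation principle (LDP): a family of real random variables $X_T$ satisfies the LDP with rate function $I:\mathbb{R}\to[0,\infty]$ and normalizing function $\psi(T)\to\infty$ if for every $c\ge0$ the set $\{x: I(x)\le c\}$ is compact, and for every Borel set $B\subseteq\mathbb{R}$, $\limsup_{T\to\infty}\frac{1}{\psi(T)}\ln\mathbf{P}(X_T\in B)\le -I([B])$ and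 $\liminf_{T\to\infty}\frac{1}{\psi(T)}\ln\mathbf{P}(X_T\in B)\ge -I((B))$, where $[B]$ and $(B)$ denote closure and interior, $I(B)=\inf_{x\in B}I(x)$ and $I(\emptyset)=\infty$. *)

theory Defs
  imports "HOL-Probability.Probability"
begin

text \<open>One step of the Markov chain eta (embedded chain with uniform catastrophes).\<close>
definition eta_step :: "real \<Rightarrow> real \<Rightarrow> nat \<Rightarrow> nat pmf" where
  "eta_step lam mu i =
     (if i = 0 then return_pmf 1
      else bind_pmf (bernoulli_pmf (lam / (lam + mu)))
             (\<lambda>b. if b then return_pmf (i + 1) else pmf_of_set {0..<i}))"

primrec eta_law :: "real \<Rightarrow> real \<Rightarrow> nat \<Rightarrow> nat pmf" where
  "eta_law lam mu 0 = return_pmf 0"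
| "eta_law lam mu (Suc n) = bind_pmf (eta_law lam mu n) (eta_step lam mu)"

text \<open>Law of xi(t) = eta(nu(t)), nu a Poisson process of rate alpha independent of eta:
  nu(t) ~ Poisson(alpha t).\<close>
definition xi_law :: "real \<Rightarrow> real \<Rightarrow> real \<Rightarrow> real \<Rightarrow> nat pmf" where
  "xi_law lam mu alpha t = bind_pmf (poisson_pmf (alpha * t)) (eta_law lam mu)"

definition eln :: "real \<Rightarrow> ereal" where
  "eln p = (if p = 0 then - \<infinity> else ereal (ln p))"

definition LDP :: "(real \<Rightarrow> real measure) \<Rightarrow> (real \<Rightarrow> ereal) \<Rightarrow> (real \<Rightarrow> real) \<Rightarrow> bool" where
  "LDP X I psi \<longleftrightarrow>
     filterlim psi at_top at_top \<and>
     (\<forall>x. I x \<ge> 0) \<and>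
     (\<forall>c::real. c \<ge> 0 \<longrightarrow> compact {x. I x \<le> ereal c}) \<and>
     (\<forall>B \<in> sets borel.
        Limsup at_top (\<lambda>T. eln (measure (X T) B) / ereal (psi T)) \<le> - (INF x\<in>closure B. I x) \<and>
        Liminf at_top (\<lambda>T. eln (measure (X T) B) / ereal (psi T)) \<ge> - (INF x\<in>interior B. I x))"

definition I2 :: "real \<Rightarrow> ereal" where
  "I2 x = (if x < 0 then \<infinity> else ereal x)"

end

theory Submission
  imports Defs
begin

text \<open>
  Since eta climbs by at most one per step, xi(T) \<ge> n forces nu(T) \<ge> n, and the Poisson tail
  gives P(xi(T) \<ge> a phi) \<le> (e alpha T / (a phi))^(a phi) = exp (- a psi(T) (1 + o(1))).
  Conversely, eta climbs straight from 0 to k in its first k steps with probability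
  p^k, p = lam / (lam + mu), so P(xi(T) = k) \<ge> P(nu(T) = k) p^k
  \<ge> exp (- alpha T - k ln (k / (alpha p T))), which is exp (- y psi(T) (1 + o(1))) for
  k = \<lceil>y phi\<rceil>; here phi(T)/T \<rightarrow> \<infinity> makes the term alpha T negligible. As xi \<ge> 0,
  these half-line upper bounds and point lower bounds give the LDP with rate x on [0, \<infinity>).
\<close>

section \<open>Bounds for pmfs and Poisson tails\<close>

lemma pmf_bind_pmf_ge: "pmf p y * pmf (f y) x \<le> pmf (bind_pmf p f) x"
proof -
  have "ennreal (pmf p y * pmf (f y) x) = (\<integral>\<^sup>+z. emeasure (f z) {x} * indicator {y} z \<partial>p)"
    by (simp add: emeasure_pmf_single ennreal_mult' mult.commute)
  also have "\<dots> \<le> (\<integral>\<^sup>+z. emeasure (f z) {x} \<partial>p)"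
    by (intro nn_integral_mono) (auto split: split_indicator)
  also have "\<dots> = ennreal (pmf (bind_pmf p f) x)"
    by (simp add: emeasure_pmf_single[symmetric])
  finally show ?thesis by (simp add: ennreal_le_iff)
qed

lemma measure_bind_pmf_atLeast_le:
  fixes q :: "'a::linorder pmf"
  assumes "\<And>x. set_pmf (f x) \<subseteq> {..x}"
  shows "measure (bind_pmf q f) {n..} \<le> measure q {n..}"
proof -
  have bound: "emeasure (f x) {n..} \<le> indicator {n..} x" for x
  proof (cases "n \<le> x")
    case False
    with assms[of x] have "{n..} \<inter> set_pmf (f x) = {}" by auto
    then show ?thesis by (simp add: measure_pmf.emeasure_eq_measure measure_Int_set_pmf[symmetric])
  qed (simp add: measure_pmf.emeasure_le_1)
  have "emeasure (bind_pmf q f) {n..} = (\<integral>\<^sup>+x. emeasure (f x) {n..} \<partial>q)"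
    by simp
  also have "\<dots> \<le> (\<integral>\<^sup>+x. indicator {n..} x \<partial>q)"
    by (rule nn_integral_mono) (rule bound)
  also have "\<dots> = emeasure q {n..}"
    by simp
  finally show ?thesis
    by (simp add: measure_pmf.emeasure_eq_measure)
qed

lemma fact_mult_fact_le_fact_add: "fact j * fact n \<le> (fact (j + n) :: real)"
proof -
  have "fact j * fact n \<le> (fact (j + n) :: nat)"
    by (rule dvd_imp_le[OF fact_fact_dvd_fact]) simp
  then show ?thesis by (metis of_nat_fact of_nat_le_iff of_nat_mult)
qed

lemma power_div_fact_le_exp:
  assumes "0 \<le> (x::real)"
  shows "x ^ n / fact n \<le> exp x"
proof -
  have exp: "(\<lambda>k. x ^ k / fact k) sums exp x"
    using exp_converges[of x] by (simp add: divide_inverse mult.commute scaleR_conv_of_real)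
  have "(\<Sum>k\<in>{n}. x ^ k / fact k) \<le> (\<Sum>k. x ^ k / fact k)"
    using exp assms by (intro sum_le_suminf) (auto simp: sums_iff)
  with exp show ?thesis by (simp add: sums_iff)
qed

lemma mult_ln_div_mono:
  fixes c s t :: real
  assumes "0 < c" "c \<le> s" "s \<le> t"
  shows "s * ln (s / c) \<le> t * ln (t / c)"
proof -
  have "0 \<le> ln (s / c)"
    using assms by simp
  moreover have "ln (s / c) \<le> ln (t / c)"
    using assms by (simp add: divide_right_mono)
  ultimately show ?thesis
    using assms by (intro mult_mono) auto
qed

lemma measure_poisson_atLeast_le:
  assumes "0 < m"
  shows "measure (poisson_pmf m) {n..} \<le> m ^ n / fact n"
proof -
  have shift: "{n..} = (\<Union>j. {j + n})"
    by (auto simp: le_iff_add add.commute)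
  have "emeasure (poisson_pmf m) {n..} = (\<Sum>j. ennreal (m ^ (j + n) / fact (j + n) * exp (- m)))"
    unfolding shift using assms
    by (subst suminf_emeasure[symmetric]) (auto simp: disjoint_family_on_def emeasure_pmf_single)
  also have "\<dots> \<le> (\<Sum>j. ennreal (m ^ n / fact n * exp (- m) * (m ^ j / fact j)))"
  proof (intro suminf_le summableI ennreal_leI)
    fix j
    have "m ^ (j + n) / fact (j + n) \<le> m ^ (j + n) / (fact j * fact n)"
      using fact_mult_fact_le_fact_add[of j n] assms by (intro divide_left_mono) auto
    then have "m ^ (j + n) / fact (j + n) * exp (- m) \<le> m ^ (j + n) / (fact j * fact n) * exp (- m)"
      by (rule mult_right_mono) simp
    then show "m ^ (j + n) / fact (j + n) * exp (- m) \<le> m ^ n / fact n * exp (- m) * (m ^ j / fact j)"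
      by (simp add: power_add ac_simps)
  qed
  also have "\<dots> = ennreal (m ^ n / fact n * exp (- m) * exp m)"
    using assms sums_mult[OF exp_converges[of m], of "m ^ n / fact n * exp (- m)"]
    by (intro suminf_ennreal_eq) (auto simp: divide_inverse mult.commute scaleR_conv_of_real)
  also have "\<dots> = ennreal (m ^ n / fact n)"
    by (simp add: exp_minus field_simps)
  finally show ?thesis
    using assms by (simp add: measure_pmf.emeasure_eq_measure ennreal_le_iff)
qed

lemma measure_poisson_atLeast_le_exp:
  assumes "0 < m"
  shows "measure (poisson_pmf m) {n..} \<le> (exp 1 * m / n) ^ n"
proof -
  have "exp (real n) = exp 1 ^ n"
    by (metis exp_of_nat_mult mult.right_neutral)
  then have "real n ^ n \<le> exp 1 ^ n * fact n"
    using power_div_fact_le_exp[of "real n" n] by (simp add: divide_le_eq)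
  moreover have "0 < real n ^ n"
    by (cases n) auto
  ultimately have "1 / fact n \<le> exp 1 ^ n / real n ^ n"
    by (simp add: divide_simps mult.commute)
  then have "m ^ n * (1 / fact n) \<le> m ^ n * (exp 1 ^ n / real n ^ n)"
    using assms by (intro mult_left_mono) auto
  then have "m ^ n / fact n \<le> (exp 1 * m / n) ^ n"
    by (simp add: power_divide power_mult_distrib ac_simps)
  with measure_poisson_atLeast_le[OF assms, of n] show ?thesis by linarith
qed

section \<open>Tail and point bounds for xi\<close>

lemma set_pmf_eta_law: "set_pmf (eta_law lam mu n) \<subseteq> {..n}"
proof (induction n)
  case (Suc n)
  have "set_pmf (eta_step lam mu i) \<subseteq> {..Suc n}" if "i \<le> n" for i
    using that by (auto simp: eta_step_def set_bind_pmf split: if_splits)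
  with Suc show ?case by (auto simp: set_bind_pmf)
qed simp

lemma pmf_eta_law_self_ge:
  assumes "0 \<le> lam" "0 \<le> mu"
  shows "(lam / (lam + mu)) ^ n \<le> pmf (eta_law lam mu n) n"
proof (induction n)
  case (Suc n)
  define p where "p = lam / (lam + mu)"
  have p: "0 \<le> p" "p \<le> 1"
    using assms by (auto simp: p_def divide_le_eq_1)
  have "p \<le> pmf (eta_step lam mu n) (Suc n)"
  proof (cases "n = 0")
    case False
    then have "pmf (bernoulli_pmf p) True * pmf (return_pmf (Suc n)) (Suc n) \<le> pmf (eta_step lam mu n) (Suc n)"
      using pmf_bind_pmf_ge[of "bernoulli_pmf p" True "\<lambda>b. if b then return_pmf (n + 1) else pmf_of_set {0..<n}" "Suc n"]
      by (simp add: eta_step_def p_def)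
    with p show ?thesis by simp
  qed (simp add: eta_step_def p)
  then have "p ^ n * p \<le> pmf (eta_law lam mu n) n * pmf (eta_step lam mu n) (Suc n)"
    using Suc.IH p unfolding p_def by (intro mult_mono) auto
  also have "\<dots> \<le> pmf (eta_law lam mu (Suc n)) (Suc n)"
    by (simp add: pmf_bind_pmf_ge)
  finally show ?case by (simp add: p_def mult.commute)
qed simp

lemma measure_xi_law_ge_le:
  assumes "0 < alpha * T" "0 < x" "exp 1 * alpha * T \<le> x"
  shows "measure (xi_law lam mu alpha T) {k. x \<le> real k} \<le> (exp 1 * alpha * T / x) powr x"
proof -
  define c where "c = exp 1 * alpha * T / x"
  define n where "n = nat \<lceil>x\<rceil>"
  have c: "0 < c" "c \<le> 1"
    using assms by (simp_all add: c_def mult.assoc)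
  have n: "x \<le> real n"
    unfolding n_def by (rule real_nat_ceiling_ge)
  have "{k. x \<le> real k} = {n..}"
    by (auto simp: n_def nat_ceiling_le_eq)
  then have "measure (xi_law lam mu alpha T) {k. x \<le> real k} \<le> measure (poisson_pmf (alpha * T)) {n..}"
    unfolding xi_law_def by (simp add: measure_bind_pmf_atLeast_le set_pmf_eta_law)
  also have "\<dots> \<le> (exp 1 * (alpha * T) / n) ^ n"
    by (rule measure_poisson_atLeast_le_exp[OF assms(1)])
  also have "\<dots> \<le> c ^ n"
    using assms n by (auto simp: c_def mult.assoc intro!: power_mono divide_left_mono)
  also have "\<dots> = c powr n"
    using c by (simp add: powr_realpow)
  also have "\<dots> \<le> c powr x"
    using c n by (intro powr_mono') auto
  finally show ?thesis
    by (simp add: c_def)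
qed

lemma pmf_xi_law_ge:
  assumes "0 < lam" "0 < mu" "0 < alpha * T"
  defines "m \<equiv> alpha * (lam / (lam + mu)) * T"
  shows "exp (- (alpha * T) - k * ln (k / m)) \<le> pmf (xi_law lam mu alpha T) k"
proof -
  have "m = alpha * T * (lam / (lam + mu))"
    by (simp add: m_def)
  then have m: "0 < m"
    using assms(1-3) by simp
  have "exp (- (alpha * T) - k * ln (k / m)) = (m / k) ^ k * exp (- (alpha * T))"
  proof (cases "k = 0")
    case False
    then have "- (alpha * T) - k * ln (k / m) = k * ln (m / k) + - (alpha * T)"
      using m by (simp add: ln_div algebra_simps)
    then show ?thesis
      using m False by (simp only: exp_add exp_of_nat_mult) simp
  qed simp
  also have "\<dots> \<le> (alpha * T) ^ k / fact k * exp (- (alpha * T)) * (lam / (lam + mu)) ^ k"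
  proof -
    have fact: "fact k \<le> real k ^ k"
      using fact_le_power[of k] by simp
    have "0 < real k ^ k"
      using fact_gt_zero fact by (rule less_le_trans)
    then have "m ^ k / real k ^ k \<le> m ^ k / fact k"
      using m fact by (intro divide_left_mono) auto
    then have "(m / k) ^ k \<le> m ^ k / fact k"
      by (simp add: power_divide)
    then have "(m / k) ^ k * exp (- (alpha * T)) \<le> m ^ k / fact k * exp (- (alpha * T))"
      by (rule mult_right_mono) simp
    also have "\<dots> = (alpha * T) ^ k / fact k * exp (- (alpha * T)) * (lam / (lam + mu)) ^ k"
      by (simp add: m_def power_mult_distrib power_divide ac_simps)
    finally show ?thesis .
  qed
  also have "\<dots> \<le> pmf (poisson_pmf (alpha * T)) k * pmf (eta_law lam mu k) k"
    unfolding pmf_poisson[OF assms(3)] using assms(1-3) by (intro mult_left_mono pmf_eta_law_self_ge) auto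
  also have "\<dots> \<le> pmf (xi_law lam mu alpha T) k"
    unfolding xi_law_def by (rule pmf_bind_pmf_ge)
  finally show ?thesis .
qed

section \<open>A criterion for the LDP with rate function I2\<close>

lemma eln_mono: "0 \<le> x \<Longrightarrow> x \<le> y \<Longrightarrow> eln x \<le> eln y"
  by (auto simp: eln_def)

lemma eln_1 [simp]: "eln 1 = 0"
  by (simp add: eln_def zero_ereal_def)

lemma eln_div_mono: "0 \<le> x \<Longrightarrow> x \<le> y \<Longrightarrow> 0 < s \<Longrightarrow> eln x / ereal s \<le> eln y / ereal s"
  by (simp add: eln_mono ereal_divide_right_mono)

lemma eln_exp_div: "0 < s \<Longrightarrow> eln (exp (s * g)) / ereal s = ereal g"
  by (simp add: eln_def)

lemma Limsup_eln_div_le: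
  assumes "eventually (\<lambda>T. 0 < s T \<and> 0 \<le> P T \<and> P T \<le> exp (s T * g T)) F"
    and "(g \<longlongrightarrow> l) F" and "F \<noteq> bot"
  shows "Limsup F (\<lambda>T. eln (P T) / ereal (s T)) \<le> ereal l"
proof -
  have "eventually (\<lambda>T. eln (P T) / ereal (s T) \<le> ereal (g T)) F"
    using assms(1) by eventually_elim (metis eln_div_mono eln_exp_div)
  then have "Limsup F (\<lambda>T. eln (P T) / ereal (s T)) \<le> Limsup F (\<lambda>T. ereal (g T))"
    by (rule Limsup_mono)
  also have "\<dots> = ereal l"
    using assms(2,3) by (intro lim_imp_Limsup tendsto_ereal)
  finally show ?thesis .
qed

lemma Liminf_eln_div_ge:
  assumes "eventually (\<lambda>T. 0 < s T \<and> exp (s T * g T) \<le> P T) F"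
    and "(g \<longlongrightarrow> l) F" and "F \<noteq> bot"
  shows "ereal l \<le> Liminf F (\<lambda>T. eln (P T) / ereal (s T))"
proof -
  have "ereal l = Liminf F (\<lambda>T. ereal (g T))"
    using assms(2,3) by (intro lim_imp_Liminf[symmetric] tendsto_ereal)
  also have "eventually (\<lambda>T. ereal (g T) \<le> eln (P T) / ereal (s T)) F"
    using assms(1) by eventually_elim (metis eln_div_mono eln_exp_div exp_ge_zero)
  then have "Liminf F (\<lambda>T. ereal (g T)) \<le> Liminf F (\<lambda>T. eln (P T) / ereal (s T))"
    by (rule Liminf_mono)
  finally show ?thesis .
qed

lemma Limsup_closed_le_I2:
  fixes p :: "real \<Rightarrow> real pmf"
  assumes psi: "eventually (\<lambda>T. 0 < psi T) at_top"
    and nonneg: "eventually (\<lambda>T. set_pmf (p T) \<subseteq> {0..}) at_top"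
    and tail: "\<And>a. 0 < a \<Longrightarrow> Limsup at_top (\<lambda>T. eln (measure (p T) {a..}) / ereal (psi T)) \<le> - ereal a"
  shows "Limsup at_top (\<lambda>T. eln (measure (p T) B) / ereal (psi T)) \<le> - (INF x\<in>closure B. I2 x)"
proof -
  define S where "S = closure B \<inter> {0..}"
  have B_S: "B \<inter> {0..} \<subseteq> S"
    using closure_subset by (auto simp: S_def)
  have support: "eventually (\<lambda>T. 0 < psi T \<and> B \<inter> set_pmf (p T) \<subseteq> S) at_top"
    using psi nonneg by eventually_elim (use B_S in blast)
  show ?thesis
  proof (cases "S = {}")
    case True
    have "eventually (\<lambda>T. eln (measure (p T) B) / ereal (psi T) \<le> - \<infinity>) at_top"
      using support
    proof eventually_elim
      case (elim T)
      then have "measure (p T) B = 0"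
        using True measure_Int_set_pmf[of "p T" B] by simp
      then show ?case
        using elim by (simp add: eln_def)
    qed
    then have "Limsup at_top (\<lambda>T. eln (measure (p T) B) / ereal (psi T)) \<le> - \<infinity>"
      by (rule Limsup_bounded)
    then show ?thesis
      by simp
  next
    case False
    define a where "a = Inf S"
    have bdd: "bdd_below S"
      by (auto simp: S_def bdd_below_def)
    have "closed S"
      by (simp add: S_def closed_Int)
    with False bdd have "a \<in> S"
      unfolding a_def by (rule closed_contains_Inf)
    have a_le: "a \<le> x" if "x \<in> S" for x
      unfolding a_def using bdd that by (rule cInf_lower[rotated])
    have "0 \<le> a" "a \<in> closure B"
      using \<open>a \<in> S\<close> by (auto simp: S_def)
    then have "(INF x\<in>closure B. I2 x) \<le> ereal a"
      by (intro INF_lower2[of a]) (auto simp: I2_def)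
    then have "- ereal a \<le> - (INF x\<in>closure B. I2 x)"
      by (simp only: ereal_minus_le_minus)
    moreover have "Limsup at_top (\<lambda>T. eln (measure (p T) B) / ereal (psi T)) \<le> - ereal a"
    proof (cases "a = 0")
      case True
      have "eventually (\<lambda>T. eln (measure (p T) B) / ereal (psi T) \<le> 0) at_top"
        using psi
      proof eventually_elim
        case (elim T)
        then have "eln (measure (p T) B) / ereal (psi T) \<le> eln 1 / ereal (psi T)"
          by (intro eln_div_mono) auto
        then show ?case
          by simp
      qed
      then show ?thesis
        using True by (simp add: Limsup_bounded zero_ereal_def[symmetric])
    next
      case False
      have "eventually (\<lambda>T. eln (measure (p T) B) / ereal (psi T) \<le> eln (measure (p T) {a..}) / ereal (psi T)) at_top"
        using support
      proof eventually_elim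
        case (elim T)
        then have "B \<inter> set_pmf (p T) \<subseteq> {a..}"
          using a_le by auto
        then have "measure (p T) (B \<inter> set_pmf (p T)) \<le> measure (p T) {a..}"
          by (intro measure_pmf.finite_measure_mono) auto
        then show ?case
          using elim by (intro eln_div_mono) (auto simp: measure_Int_set_pmf)
      qed
      then have "Limsup at_top (\<lambda>T. eln (measure (p T) B) / ereal (psi T))
          \<le> Limsup at_top (\<lambda>T. eln (measure (p T) {a..}) / ereal (psi T))"
        by (rule Limsup_mono)
      also have "\<dots> \<le> - ereal a"
        using False \<open>0 \<le> a\<close> by (intro tail) simp
      finally show ?thesis .
    qed
    ultimately show ?thesis
      by (rule order.trans[rotated])
  qed
qed

lemma Liminf_open_ge_I2:
  fixes p :: "real \<Rightarrow> real pmf"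
  assumes psi: "eventually (\<lambda>T. 0 < psi T) at_top"
    and ball: "\<And>y d. 0 < y \<Longrightarrow> 0 < d \<Longrightarrow>
      - ereal y \<le> Liminf at_top (\<lambda>T. eln (measure (p T) (ball y d)) / ereal (psi T))"
  shows "- (INF x\<in>interior B. I2 x) \<le> Liminf at_top (\<lambda>T. eln (measure (p T) B) / ereal (psi T))"
    (is "_ \<le> ?L")
proof -
  have "- ereal x \<le> ?L" if "x \<in> interior B" "0 \<le> x" for x
  proof (rule ereal_le_epsilon2)
    fix e :: real
    assume "0 < e"
    obtain d where "0 < d" "ball x d \<subseteq> interior B"
      using open_interior \<open>x \<in> interior B\<close> by (meson openE)
    define y where "y = x + min e d / 2"
    have "ball y (d / 2) \<subseteq> ball x d"
      using \<open>0 < e\<close> \<open>0 < d\<close> by (auto simp: y_def dist_real_def abs_if min_def split: if_splits)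
    then have y_B: "ball y (d / 2) \<subseteq> B"
      using \<open>ball x d \<subseteq> interior B\<close> interior_subset by blast
    have "eventually (\<lambda>T. eln (measure (p T) (ball y (d / 2))) / ereal (psi T)
        \<le> eln (measure (p T) B) / ereal (psi T)) at_top"
      using psi
    proof eventually_elim
      case (elim T)
      have "measure (p T) (ball y (d / 2)) \<le> measure (p T) B"
        using y_B by (intro measure_pmf.finite_measure_mono) auto
      then show ?case
        using elim by (intro eln_div_mono) auto
    qed
    then have "Liminf at_top (\<lambda>T. eln (measure (p T) (ball y (d / 2))) / ereal (psi T)) \<le> ?L"
      by (rule Liminf_mono)
    moreover have "- ereal y \<le> Liminf at_top (\<lambda>T. eln (measure (p T) (ball y (d / 2))) / ereal (psi T))"
      using \<open>0 < e\<close> \<open>0 \<le> x\<close> \<open>0 < d\<close> by (intro ball) (auto simp: y_def)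
    moreover have "- ereal x \<le> - ereal y + ereal e"
      using \<open>0 < e\<close> \<open>0 < d\<close> by (simp add: y_def)
    ultimately show "- ereal x \<le> ?L + ereal e"
      by (meson add_right_mono order.trans)
  qed
  then have "- ?L \<le> I2 x" if "x \<in> interior B" for x
    using that by (cases "x < 0") (auto simp: I2_def ereal_uminus_le_reorder)
  then have "- ?L \<le> (INF x\<in>interior B. I2 x)"
    by (rule INF_greatest)
  then show ?thesis
    by (simp add: ereal_uminus_le_reorder)
qed

lemma LDP_I2_pmf:
  fixes p :: "real \<Rightarrow> real pmf"
  assumes psi: "filterlim psi at_top at_top"
    and nonneg: "eventually (\<lambda>T. set_pmf (p T) \<subseteq> {0..}) at_top"
    and tail: "\<And>a. 0 < a \<Longrightarrow> Limsup at_top (\<lambda>T. eln (measure (p T) {a..}) / ereal (psi T)) \<le> - ereal a"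
    and ball: "\<And>y d. 0 < y \<Longrightarrow> 0 < d \<Longrightarrow>
      - ereal y \<le> Liminf at_top (\<lambda>T. eln (measure (p T) (ball y d)) / ereal (psi T))"
  shows "LDP (\<lambda>T. measure_pmf (p T)) I2 psi"
proof -
  have psi_pos: "eventually (\<lambda>T. 0 < psi T) at_top"
    using psi by (simp add: filterlim_at_top_dense)
  show ?thesis
    unfolding LDP_def
  proof (intro conjI allI impI ballI)
    show "0 \<le> I2 x" for x
      by (simp add: I2_def)
    have "{x. I2 x \<le> ereal c} = {0..c}" for c
      by (auto simp: I2_def)
    then show "compact {x. I2 x \<le> ereal c}" for c
      by simp
  qed (use psi Limsup_closed_le_I2[OF psi_pos nonneg tail] Liminf_open_ge_I2[OF psi_pos ball] in auto)
qed

section \<open>Asymptotics under superlinear normalisation\<close>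

context
  fixes phi :: "real \<Rightarrow> real"
  assumes superlinear: "filterlim (\<lambda>T. phi T / T) at_top at_top"
begin

lemma eventually_superlinear_gt: "eventually (\<lambda>T. 0 < T \<and> T < phi T) at_top"
proof -
  have "eventually (\<lambda>T. 1 < phi T / T) at_top"
    using superlinear by (simp add: filterlim_at_top_dense)
  with eventually_gt_at_top[of 0] show ?thesis
    by eventually_elim (simp add: field_simps)
qed

lemma superlinear_at_top: "filterlim phi at_top at_top"
proof -
  have "filterlim (\<lambda>T. phi T / T * T) at_top at_top"
    by (rule filterlim_at_top_mult_at_top[OF superlinear filterlim_ident])
  moreover have "eventually (\<lambda>T. phi T / T * T = phi T) at_top"
    using eventually_gt_at_top[of 0] by eventually_elim simp
  ultimately show ?thesis
    using filterlim_cong by fastforce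
qed

lemma ln_superlinear_ratio_at_top: "filterlim (\<lambda>T. ln (phi T / T)) at_top at_top"
  by (rule filterlim_compose[OF ln_at_top superlinear])

lemma superlinear_speed_at_top: "filterlim (\<lambda>T. phi T * ln (phi T / T)) at_top at_top"
  by (rule filterlim_at_top_mult_at_top[OF superlinear_at_top ln_superlinear_ratio_at_top])

lemma Limsup_xi_law_tail:
  assumes "0 < alpha" "0 < a"
  shows "Limsup at_top (\<lambda>T. eln (measure (map_pmf (\<lambda>k. real k / phi T) (xi_law lam mu alpha T)) {a..})
      / ereal (phi T * ln (phi T / T))) \<le> - ereal a"
proof -
  \<comment> \<open>g T is a phi T ln (e alpha T / (a phi T)), the log of the tail bound, divided by the speed.\<close>
  define g where "g T = a * (1 + ln (alpha / a)) * inverse (ln (phi T / T)) - a" for T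
  have "eventually (\<lambda>T. exp 1 * alpha / a < phi T / T) at_top"
    using superlinear by (simp add: filterlim_at_top_dense)
  with eventually_superlinear_gt
  have "eventually (\<lambda>T. 0 < phi T * ln (phi T / T)
      \<and> 0 \<le> measure (map_pmf (\<lambda>k. real k / phi T) (xi_law lam mu alpha T)) {a..}
      \<and> measure (map_pmf (\<lambda>k. real k / phi T) (xi_law lam mu alpha T)) {a..}
          \<le> exp (phi T * ln (phi T / T) * g T)) at_top"
  proof eventually_elim
    case (elim T)
    define x where "x = a * phi T"
    have T: "0 < T" "0 < phi T" "0 < ln (phi T / T)"
      using elim by auto
    have x: "0 < x" "exp 1 * alpha * T \<le> x"
      using elim assms by (auto simp: x_def field_simps)
    have "(\<lambda>k. real k / phi T) -` {a..} = {k. x \<le> real k}"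
      using T by (auto simp: x_def field_simps)
    then have "measure (map_pmf (\<lambda>k. real k / phi T) (xi_law lam mu alpha T)) {a..}
        \<le> (exp 1 * alpha * T / x) powr x"
      using assms T x by (simp add: measure_xi_law_ge_le)
    also have "\<dots> = exp (x * (1 + ln (alpha / a) - ln (phi T / T)))"
    proof -
      have "ln (exp 1 * alpha * T / x) = 1 + ln (alpha / a) - ln (phi T / T)"
        using assms T by (simp add: x_def ln_div ln_mult)
      then show ?thesis
        using assms T x by (simp add: powr_def mult.commute)
    qed
    also have "x * (1 + ln (alpha / a) - ln (phi T / T)) = phi T * ln (phi T / T) * g T"
      using T by (simp add: x_def g_def field_simps)
    finally show ?case
      using T by simp
  qed
  moreover have "(g \<longlongrightarrow> a * (1 + ln (alpha / a)) * 0 - a) at_top"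
    unfolding g_def
    by (intro tendsto_intros tendsto_inverse_0_at_top ln_superlinear_ratio_at_top)
  ultimately show ?thesis
    using Limsup_eln_div_le[where g = g] by simp
qed

lemma Liminf_xi_law_ball:
  assumes "0 < lam" "0 < mu" "0 < alpha" "0 < y" "0 < d"
  shows "- ereal y \<le> Liminf at_top (\<lambda>T. eln (measure (map_pmf (\<lambda>k. real k / phi T) (xi_law lam mu alpha T)) (ball y d))
      / ereal (phi T * ln (phi T / T)))"
proof -
  define p where "p = lam / (lam + mu)"
  \<comment> \<open>h T is - alpha T - (y phi T + 1) ln ((y phi T + 1) / (alpha p T)) divided by the speed.\<close>
  define h where "h T = - (alpha * inverse (phi T / T) * inverse (ln (phi T / T)))
      - (y + inverse (phi T)) * (1 + ln ((y + inverse (phi T)) / (alpha * p)) * inverse (ln (phi T / T)))" for T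
  have p: "0 < p"
    using assms by (simp add: p_def)
  have "eventually (\<lambda>T. alpha * p / y < phi T / T) at_top"
    using superlinear by (simp add: filterlim_at_top_dense)
  moreover have "eventually (\<lambda>T. 1 / d < phi T) at_top"
    using superlinear_at_top by (simp add: filterlim_at_top_dense)
  ultimately have "eventually (\<lambda>T. 0 < phi T * ln (phi T / T) \<and> exp (phi T * ln (phi T / T) * h T)
      \<le> measure (map_pmf (\<lambda>k. real k / phi T) (xi_law lam mu alpha T)) (ball y d)) at_top"
    using eventually_superlinear_gt
  proof eventually_elim
    case (elim T)
    define k where "k = nat \<lceil>y * phi T\<rceil>"
    define m where "m = alpha * p * T"
    have T: "0 < T" "0 < phi T" "0 < ln (phi T / T)"
      using elim by auto
    have k: "y * phi T \<le> k" "k \<le> y * phi T + 1"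
      using assms T by (auto simp: k_def)
    have m: "0 < m" "m \<le> y * phi T"
      using assms p elim by (auto simp: m_def field_simps)
    have "ln ((y * phi T + 1) / m) = ln (phi T / T) + ln ((y + inverse (phi T)) / (alpha * p))"
    proof -
      have "(y * phi T + 1) / m = phi T / T * ((y + inverse (phi T)) / (alpha * p))"
        using T assms p by (simp add: m_def field_simps)
      moreover have "0 < (y + inverse (phi T)) / (alpha * p)"
        using T assms p by (auto intro!: divide_pos_pos add_pos_pos)
      ultimately show ?thesis
        using T by (simp only: ln_mult_pos divide_pos_pos)
    qed
    then have "phi T * ln (phi T / T) * h T = - (alpha * T) - (y * phi T + 1) * ln ((y * phi T + 1) / m)"
      using T by (simp add: h_def field_simps)
    also have "\<dots> \<le> - (alpha * T) - k * ln (k / m)"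
      using m k by (simp add: mult_ln_div_mono)
    finally have "exp (phi T * ln (phi T / T) * h T) \<le> exp (- (alpha * T) - k * ln (k / m))"
      by simp
    also have "\<dots> \<le> pmf (xi_law lam mu alpha T) k"
      using pmf_xi_law_ge[of lam mu alpha T k] assms T by (simp add: m_def p_def)
    also have "\<dots> \<le> measure (map_pmf (\<lambda>k. real k / phi T) (xi_law lam mu alpha T)) (ball y d)"
    proof -
      have "y \<le> k / phi T" "k / phi T \<le> y + 1 / phi T" "1 / phi T < d"
        using k T elim assms(5) by (auto simp: field_simps)
      then have "{k} \<subseteq> (\<lambda>k. real k / phi T) -` ball y d"
        by (auto simp: dist_real_def)
      then show ?thesis
        by (simp add: measure_pmf_single[symmetric] measure_pmf.finite_measure_mono)
    qed
    finally show ?case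
      using T by simp
  qed
  moreover have "(h \<longlongrightarrow> - (alpha * 0 * 0) - (y + 0) * (1 + ln ((y + 0) / (alpha * p)) * 0)) at_top"
    unfolding h_def using assms p
    by (intro tendsto_intros tendsto_inverse_0_at_top superlinear ln_superlinear_ratio_at_top superlinear_at_top) auto
  ultimately show ?thesis
    using Liminf_eln_div_ge[where g = h] by simp
qed

end

theorem theorem2p4:
  fixes lam mu alpha :: real and phi :: "real \<Rightarrow> real"
  assumes "lam > 0" and "mu > 0" and "alpha > 0"
    and "\<forall>T>0. phi T > 0"
    and "filterlim (\<lambda>T. phi T / T) at_top at_top"
  shows "LDP (\<lambda>T. measure_pmf (map_pmf (\<lambda>k. real k / phi T) (xi_law lam mu alpha T)))
             I2 (\<lambda>T. phi T * ln (phi T / T))"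
proof (rule LDP_I2_pmf)
  show "filterlim (\<lambda>T. phi T * ln (phi T / T)) at_top at_top"
    using assms(5) by (rule superlinear_speed_at_top)
  show "eventually (\<lambda>T. set_pmf (map_pmf (\<lambda>k. real k / phi T) (xi_law lam mu alpha T)) \<subseteq> {0..}) at_top"
    using eventually_superlinear_gt[OF assms(5)] by eventually_elim auto
  show "Limsup at_top (\<lambda>T. eln (measure (map_pmf (\<lambda>k. real k / phi T) (xi_law lam mu alpha T)) {a..})
      / ereal (phi T * ln (phi T / T))) \<le> - ereal a" if "0 < a" for a
    using assms(5,3) that by (rule Limsup_xi_law_tail)
  show "- ereal y \<le> Liminf at_top (\<lambda>T. eln (measure (map_pmf (\<lambda>k. real k / phi T) (xi_law lam mu alpha T)) (ball y d))
      / ereal (phi T * ln (phi T / T)))" if "0 < y" "0 < d" for y d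
    using assms(5,1-3) that by (rule Liminf_xi_law_ball)
qed

end
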